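(* Let $q'>0$, $e'\in(0,1)$, $q_{\max}>0$. There is no $(q,e)\in\mathcal D_4$ such that the orbits are linked for every $(\omega,\omega')\in\mathcal D_3$.
   Context: For $q>0$, $e\in[0,1]$ and angles $\omega,\omega'$, define $r_{\pm}=\frac{q(1+e)}{1\pm e\cos\omega}$, $r'_{\pm}=\frac{q'(1+e')}{1\pm e'\cos\omega'}$ (extended-real values allowed), $d^+=r'_+-r_+$, $d^-=r'_--r_-$. Linked orbits: $d^+d^-<0$. $\mathcal D_3=\{(\omega,\omega'):0\le\omega\le\pi/2,\ 0\le\omega'\le\pi\}$, $\mathcal D_4=\{(q,e):0<q\le q_{\max},\ 0\le e\le1\}$. *)

theory Defs
  imports "HOL-Analysis.Analysis" "HOL-Library.Extended_Real"
begin

text \<open>Apsidal-type distances with extended-real values: a zero denominator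
  (only possible for e = 1) gives +infinity, since the numerator q(1+e) is positive.\<close>

definition r_plus :: "real \<Rightarrow> real \<Rightarrow> real \<Rightarrow> ereal" where
  "r_plus q e \<omega> = (if 1 + e * cos \<omega> = 0 then PInfty
                      else ereal (q * (1 + e) / (1 + e * cos \<omega>)))"

definition r_minus :: "real \<Rightarrow> real \<Rightarrow> real \<Rightarrow> ereal" where
  "r_minus q e \<omega> = (if 1 - e * cos \<omega> = 0 then PInfty
                      else ereal (q * (1 + e) / (1 - e * cos \<omega>)))"

definition d_plus :: "real \<Rightarrow> real \<Rightarrow> real \<Rightarrow> real \<Rightarrow> real \<Rightarrow> real \<Rightarrow> ereal" where
  "d_plus q e \<omega> q' e' \<omega>' = r_plus q' e' \<omega>' - r_plus q e \<omega>"

definition d_minus :: "real \<Rightarrow> real \<Rightarrow> real \<Rightarrow> real \<Rightarrow> real \<Rightarrow> real \<Rightarrow> ereal" where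
  "d_minus q e \<omega> q' e' \<omega>' = r_minus q' e' \<omega>' - r_minus q e \<omega>"

definition linked :: "real \<Rightarrow> real \<Rightarrow> real \<Rightarrow> real \<Rightarrow> real \<Rightarrow> real \<Rightarrow> bool" where
  "linked q e \<omega> q' e' \<omega>' \<longleftrightarrow> d_plus q e \<omega> q' e' \<omega>' * d_minus q e \<omega> q' e' \<omega>' < 0"

end

theory Submission
  imports Defs
begin

text \<open>When both arguments of pericentre are \<open>\<pi>/2\<close> the two nodal distances of each orbit
  coincide, so \<open>d\<^sup>+ = d\<^sup>-\<close> and \<open>d\<^sup>+ d\<^sup>-\<close> is a square, which is never negative. Since
  \<open>(\<pi>/2, \<pi>/2) \<in> \<D>\<^sub>3\<close>, no orbit can be linked with the given one for all of \<open>\<D>\<^sub>3\<close>.\<close>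

lemma r_plus_eq_r_minus_if_cos_zero:
  assumes "cos \<omega> = 0"
  shows "r_plus q e \<omega> = r_minus q e \<omega>"
  using assms by (simp add: r_plus_def r_minus_def)

lemma d_plus_eq_d_minus_if_cos_zero:
  assumes "cos \<omega> = 0" and "cos \<omega>' = 0"
  shows "d_plus q e \<omega> q' e' \<omega>' = d_minus q e \<omega> q' e' \<omega>'"
  using assms by (simp add: d_plus_def d_minus_def r_plus_eq_r_minus_if_cos_zero)

lemma not_linked_if_cos_zero:
  assumes "cos \<omega> = 0" and "cos \<omega>' = 0"
  shows "\<not> linked q e \<omega> q' e' \<omega>'"
proof -
  have "0 \<le> d_plus q e \<omega> q' e' \<omega>' * d_plus q e \<omega> q' e' \<omega>'"
    by (cases "d_plus q e \<omega> q' e' \<omega>'") auto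
  then show ?thesis
    using assms by (simp add: linked_def d_plus_eq_d_minus_if_cos_zero)
qed

theorem mainTheorem12:
  fixes q' e' qmax :: real
  assumes "q' > 0" and "0 < e'" and "e' < 1" and "qmax > 0"
  shows "\<not> (\<exists>q e. 0 < q \<and> q \<le> qmax \<and> 0 \<le> e \<and> e \<le> 1 \<and>
             (\<forall>\<omega> \<omega>'. 0 \<le> \<omega> \<and> \<omega> \<le> pi / 2 \<and> 0 \<le> \<omega>' \<and> \<omega>' \<le> pi \<longrightarrow>
                 linked q e \<omega> q' e' \<omega>'))"
proof
  assume "\<exists>q e. 0 < q \<and> q \<le> qmax \<and> 0 \<le> e \<and> e \<le> 1 \<and>
             (\<forall>\<omega> \<omega>'. 0 \<le> \<omega> \<and> \<omega> \<le> pi / 2 \<and> 0 \<le> \<omega>' \<and> \<omega>' \<le> pi \<longrightarrow>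
                 linked q e \<omega> q' e' \<omega>')"
  then obtain q e where "linked q e (pi / 2) q' e' (pi / 2)"
    using pi_half_gt_zero by (smt (verit) field_sum_of_halves)
  then show False
    using not_linked_if_cos_zero by simp
qed

end
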